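(* Let $g\ge2$, $n\ge1$ and $d\in\mathbb Z$. For $j=2,\dots,n$ let $T_j$ and let $S$ be the operators on degree $d$ universal stability conditions of type $(g,n)$ given by $T_j(\mathfrak m)_{(e,h,A)}=\mathfrak m_{(e,h,A)}+1$ if $1\in A,j\notin A$; $=\mathfrak m_{(e,h,A)}-1$ if $1\notin A, j\in A$; $=\mathfrak m_{(e,h,A)}$ otherwise; and $S(\mathfrak m)_{(e,h,A)}=\mathfrak m_{(e,h,A)}+2g-2h-e$ if $1\in A$, $=\mathfrak m_{(e,h,A)}-(2h+e-2)$ if $1\notin A$. These operators (which correspond to tensoring the associated Jacobian with $\mathcal O(\Sigma_1-\Sigma_j)$ and $\mathcal O((2g-2)\Sigma_1)\otimes\omega_\pi^{-1}$ respectively) generate a group action on the set of degree $d$ universal stability conditions of type $(g,n)$, and every orbit of this action contains exactly one $\mathfrak m$ satisfying $\mathfrak m_{(2,0,\{1\})}\in\{0,1,\dots,2g-3\}$ and $\mathfrak m_{(2,0,\{i\})}=0$ for all $i\in\{2,\dots,n\}$.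
   Context: Fix $g\ge2$, $n\ge1$, $[n]=\{1,\dots,n\}$. The vine graph $V(e,h,A)$ has two vertices $v_1,v_2$ joined by $e$ edges, no loops, with vertex genera $g(v_1)=h$, $g(v_2)=g+1-e-h$ and markings $A$ at $v_1$, $[n]\setminus A$ at $v_2$; it is stable if $2h-2+e+|A|>0$ and $2(g+1-e-h)-2+e+n-|A|>0$. $\mathcal D_{g,n}$ is the set of triples $(e,h,A)$ with $e\ge1$, $h\ge0$, $g+1-e-h\ge0$, $A\subseteq[n]$ and $V(e,h,A)$ stable. A degree $d$ universal stability condition of type $(g,n)$ is a family of integers $(\mathfrak m_{(e,h,A)})_{(e,h,A)\in\mathcal D_{g,n}}$ such that (i) $\mathfrak m_{(e,h,A)}+\mathfrak m_{(e,g+1-e-h,[n]\setminus A)}=d+1-e$ for all $(e,h,A)$, and (ii) $0\le \mathfrak m_{(e,h,A)}-h-(\mathfrak m_{(e',h',A')}-h')-(\mathfrak m_{(e'',h'',A'')}-h'')\le1$ whenever $A=A'\sqcup A''$, $2(h+1-h'-h'')=e'+e''-e$, and $e<e'+e''$, $e'<e+e''$, $e''<e+e'$. *)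

theory Defs
  imports Main
begin

type_synonym vine = "nat \<times> nat \<times> nat set"

text \<open>The index set D_{g,n}: triples (e,h,A) with e \<ge> 1, h \<ge> 0, g+1-e-h \<ge> 0,
  A \<subseteq> [n], and V(e,h,A) stable.\<close>
definition Dgn :: "nat \<Rightarrow> nat \<Rightarrow> vine set" where
  "Dgn g n = {(e,h,A). 1 \<le> e \<and> e + h \<le> g + 1 \<and> A \<subseteq> {1..n} \<and>
      2 * int h - 2 + int e + int (card A) > 0 \<and>
      2 * (int g + 1 - int e - int h) - 2 + int e + int n - int (card A) > 0}"

text \<open>Degree d universal stability conditions of type (g,n); a condition is an
  integer family indexed by D_{g,n}, represented as a function that vanishes off D_{g,n}.\<close>
definition USC :: "nat \<Rightarrow> nat \<Rightarrow> int \<Rightarrow> (vine \<Rightarrow> int) set" where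
  "USC g n d = {m.
     (\<forall>x. x \<notin> Dgn g n \<longrightarrow> m x = 0) \<and>
     (\<forall>e h A. (e,h,A) \<in> Dgn g n \<longrightarrow>
        m (e,h,A) + m (e, g + 1 - e - h, {1..n} - A) = d + 1 - int e) \<and>
     (\<forall>e h A e' h' A' e'' h'' A''.
        (e,h,A) \<in> Dgn g n \<and> (e',h',A') \<in> Dgn g n \<and> (e'',h'',A'') \<in> Dgn g n \<and>
        A = A' \<union> A'' \<and> A' \<inter> A'' = {} \<and>
        2 * (int h + 1 - int h' - int h'') = int e' + int e'' - int e \<and>
        e < e' + e'' \<and> e' < e + e'' \<and> e'' < e + e' \<longrightarrow>
        0 \<le> (m (e,h,A) - int h) - (m (e',h',A') - int h') - (m (e'',h'',A'') - int h'') \<and>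
        (m (e,h,A) - int h) - (m (e',h',A') - int h') - (m (e'',h'',A'') - int h'') \<le> 1)}"

definition Top :: "nat \<Rightarrow> nat \<Rightarrow> nat \<Rightarrow> (vine \<Rightarrow> int) \<Rightarrow> (vine \<Rightarrow> int)" where
  "Top g n j m = (\<lambda>(e,h,A). if (e,h,A) \<in> Dgn g n then
       (if 1 \<in> A \<and> j \<notin> A then m (e,h,A) + 1
        else if 1 \<notin> A \<and> j \<in> A then m (e,h,A) - 1
        else m (e,h,A))
     else 0)"

definition Sop :: "nat \<Rightarrow> nat \<Rightarrow> (vine \<Rightarrow> int) \<Rightarrow> (vine \<Rightarrow> int)" where
  "Sop g n m = (\<lambda>(e,h,A). if (e,h,A) \<in> Dgn g n then
       (if 1 \<in> A then m (e,h,A) + 2 * int g - 2 * int h - int e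
        else m (e,h,A) - (2 * int h + int e - 2))
     else 0)"

definition gens :: "nat \<Rightarrow> nat \<Rightarrow> ((vine \<Rightarrow> int) \<Rightarrow> (vine \<Rightarrow> int)) set" where
  "gens g n = insert (Sop g n) {Top g n j | j. j \<in> {2..n}}"

inductive_set orbit :: "nat \<Rightarrow> nat \<Rightarrow> int \<Rightarrow> (vine \<Rightarrow> int) \<Rightarrow> (vine \<Rightarrow> int) set"
  for g n d m where
  base: "m \<in> orbit g n d m"
| fwd: "x \<in> orbit g n d m \<Longrightarrow> f \<in> gens g n \<Longrightarrow> f x \<in> orbit g n d m"
| bwd: "x \<in> orbit g n d m \<Longrightarrow> f \<in> gens g n \<Longrightarrow> inv_into (USC g n d) f x \<in> orbit g n d m"

definition normalized :: "nat \<Rightarrow> nat \<Rightarrow> (vine \<Rightarrow> int) \<Rightarrow> bool" where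
  "normalized g n m \<longleftrightarrow> m (2, 0, {1}) \<in> {0 .. 2 * int g - 3} \<and>
     (\<forall>i \<in> {2..n}. m (2, 0, {i}) = 0)"

end

theory Submission
  imports Defs
begin

text \<open>Each generator translates a stability condition on \<open>D(g,n)\<close> by an integer function
  satisfying the homogeneous versions of (i) and (ii). Such translations preserve (i) and (ii),
  so the generators act bijectively, and the orbit of \<open>m\<close> consists exactly of the translates
  by \<open>\<Sum>j. a j \<tau> j + b \<sigma>\<close>, where \<open>\<tau> j\<close> and \<open>\<sigma>\<close> are the increments of \<open>T j\<close> and \<open>S\<close>.
  Such a translate takes the value \<open>m(2,0,{i}) - a i\<close> at \<open>(2,0,{i})\<close> for \<open>i \<ge> 2\<close>, and
  \<open>m(2,0,{1}) + (\<Sum>j. a j) + b (2g-2)\<close> at \<open>(2,0,{1})\<close>. Normalization therefore forces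
  \<open>a i = m(2,0,{i})\<close>, and then \<open>b\<close> is determined by division with remainder by \<open>2g-2\<close>.\<close>

lemma Dgn_complement:
  assumes "(e,h,A) \<in> Dgn g n"
  shows "(e, g + 1 - e - h, {1..n} - A) \<in> Dgn g n"
proof -
  have A: "A \<subseteq> {1..n}" and eh: "e + h \<le> g + 1" using assms by (auto simp: Dgn_def)
  moreover have "card A \<le> n" using card_mono[OF _ A] by simp
  ultimately have "int (card ({1..n} - A)) = int n - int (card A)"
    by (simp add: card_Diff_subset finite_subset)
  with assms eh show ?thesis by (auto simp: Dgn_def of_nat_diff)
qed

definition shift :: "nat \<Rightarrow> nat \<Rightarrow> (vine \<Rightarrow> int) \<Rightarrow> (vine \<Rightarrow> int) \<Rightarrow> vine \<Rightarrow> int" where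
  "shift g n c m = (\<lambda>v. if v \<in> Dgn g n then m v + c v else 0)"

text \<open>The linear parts of the affine conditions (i) and (ii).\<close>
definition compatible :: "nat \<Rightarrow> nat \<Rightarrow> (vine \<Rightarrow> int) \<Rightarrow> bool" where
  "compatible g n c \<longleftrightarrow>
     (\<forall>e h A. (e,h,A) \<in> Dgn g n \<longrightarrow> c (e,h,A) + c (e, g + 1 - e - h, {1..n} - A) = 0) \<and>
     (\<forall>e h A e' h' A' e'' h'' A''.
        (e,h,A) \<in> Dgn g n \<and> (e',h',A') \<in> Dgn g n \<and> (e'',h'',A'') \<in> Dgn g n \<and>
        A = A' \<union> A'' \<and> A' \<inter> A'' = {} \<and>
        2 * (int h + 1 - int h' - int h'') = int e' + int e'' - int e \<longrightarrow>
        c (e,h,A) = c (e',h',A') + c (e'',h'',A''))"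

lemma shift_USC:
  assumes c: "compatible g n c" and m: "m \<in> USC g n d"
  shows "shift g n c m \<in> USC g n d"
proof -
  have "shift g n c m (e,h,A) + shift g n c m (e, g + 1 - e - h, {1..n} - A) = d + 1 - int e"
    if D: "(e,h,A) \<in> Dgn g n" for e h A
  proof -
    have "c (e,h,A) + c (e, g + 1 - e - h, {1..n} - A) = 0"
      and "m (e,h,A) + m (e, g + 1 - e - h, {1..n} - A) = d + 1 - int e"
      using c m D unfolding compatible_def USC_def by blast+
    with D Dgn_complement[OF D] show ?thesis by (simp add: shift_def)
  qed
  moreover have "0 \<le> (shift g n c m (e,h,A) - int h) - (shift g n c m (e',h',A') - int h')
        - (shift g n c m (e'',h'',A'') - int h'') \<and>
      (shift g n c m (e,h,A) - int h) - (shift g n c m (e',h',A') - int h')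
        - (shift g n c m (e'',h'',A'') - int h'') \<le> 1"
    if split: "(e,h,A) \<in> Dgn g n" "(e',h',A') \<in> Dgn g n" "(e'',h'',A'') \<in> Dgn g n"
      "A = A' \<union> A''" "A' \<inter> A'' = {}" "2 * (int h + 1 - int h' - int h'') = int e' + int e'' - int e"
      and triangle: "e < e' + e''" "e' < e + e''" "e'' < e + e'"
    for e h A e' h' A' e'' h'' A''
  proof -
    have "c (e,h,A) = c (e',h',A') + c (e'',h'',A'')"
      using c split unfolding compatible_def by blast
    moreover have "0 \<le> (m (e,h,A) - int h) - (m (e',h',A') - int h') - (m (e'',h'',A'') - int h'') \<and>
        (m (e,h,A) - int h) - (m (e',h',A') - int h') - (m (e'',h'',A'') - int h'') \<le> 1"
      using m split triangle unfolding USC_def by blast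
    ultimately show ?thesis using split(1-3) by (simp add: shift_def)
  qed
  ultimately show ?thesis unfolding USC_def by (auto simp: shift_def)
qed

lemma shift_shift: "shift g n c (shift g n c' m) = shift g n (\<lambda>v. c' v + c v) m"
  by (simp add: shift_def fun_eq_iff)

lemma shift_zero: "m \<in> USC g n d \<Longrightarrow> shift g n (\<lambda>v. 0) m = m"
  by (auto simp: shift_def USC_def fun_eq_iff)

lemma compatible_uminus: "compatible g n c \<Longrightarrow> compatible g n (\<lambda>v. - c v)"
  unfolding compatible_def by (auto simp: add_eq_0_iff)

lemma shift_bij:
  assumes "compatible g n c"
  shows "bij_betw (shift g n c) (USC g n d) (USC g n d)"
  by (rule bij_betw_byWitness[where f' = "shift g n (\<lambda>v. - c v)"])
    (auto simp: assms shift_USC compatible_uminus shift_shift shift_zero)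

lemma inv_into_shift:
  assumes "compatible g n c" and "m \<in> USC g n d"
  shows "inv_into (USC g n d) (shift g n c) m = shift g n (\<lambda>v. - c v) m"
  by (rule inv_into_f_eq)
    (auto simp: assms shift_USC compatible_uminus shift_shift shift_zero[OF assms(2)]
      bij_betw_imp_inj_on[OF shift_bij])

definition Top_shift :: "nat \<Rightarrow> vine \<Rightarrow> int" where
  "Top_shift j = (\<lambda>(e,h,A). of_bool (1 \<in> A) - of_bool (j \<in> A))"

definition Sop_shift :: "nat \<Rightarrow> vine \<Rightarrow> int" where
  "Sop_shift g = (\<lambda>(e,h,A). (if 1 \<in> A then 2 * int g else 2) - 2 * int h - int e)"

lemma Top_eq_shift: "Top g n j = shift g n (Top_shift j)"
  by (auto simp: Top_def shift_def Top_shift_def fun_eq_iff)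

lemma Sop_eq_shift: "Sop g n = shift g n (Sop_shift g)"
  by (auto simp: Sop_def shift_def Sop_shift_def fun_eq_iff)

lemma Top_shift_complement:
  "j \<in> {1..n} \<Longrightarrow> Top_shift j (e', h', {1..n} - A) = - Top_shift j (e, h, A)"
  by (auto simp: Top_shift_def)

lemma Top_shift_union:
  "A' \<inter> A'' = {} \<Longrightarrow> Top_shift j (e, h, A' \<union> A'') = Top_shift j (e', h', A') + Top_shift j (e'', h'', A'')"
  by (auto simp: Top_shift_def)

lemma Sop_shift_complement:
  "e + h \<le> g + 1 \<Longrightarrow> n \<ge> 1 \<Longrightarrow> Sop_shift g (e, g + 1 - e - h, {1..n} - A) = - Sop_shift g (e, h, A)"
  by (auto simp: Sop_shift_def of_nat_diff)

lemma Sop_shift_union: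
  "A' \<inter> A'' = {} \<Longrightarrow> 2 * (int h + 1 - int h' - int h'') = int e' + int e'' - int e \<Longrightarrow>
    Sop_shift g (e, h, A' \<union> A'') = Sop_shift g (e', h', A') + Sop_shift g (e'', h'', A'')"
  by (auto simp: Sop_shift_def)

text \<open>\<open>twist g n a b\<close> is the effect of tensoring with
  \<open>O(\<Sum>j. a j (\<Sigma>1 - \<Sigma>j)) \<otimes> (O((2g-2) \<Sigma>1) \<otimes> \<omega>\<^sup>-\<^sup>1)^b\<close>.\<close>
definition twist :: "nat \<Rightarrow> nat \<Rightarrow> (nat \<Rightarrow> int) \<Rightarrow> int \<Rightarrow> vine \<Rightarrow> int" where
  "twist g n a b v = (\<Sum>j\<in>{2..n}. a j * Top_shift j v) + b * Sop_shift g v"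

lemma twist_lincomb:
  "twist g n a b v + k * twist g n a' b' v = twist g n (\<lambda>j. a j + k * a' j) (b + k * b') v"
  by (simp add: twist_def sum.distrib sum_distrib_left algebra_simps)

lemma twist_cong: "(\<And>j. j \<in> {2..n} \<Longrightarrow> a j = a' j) \<Longrightarrow> twist g n a b = twist g n a' b"
  unfolding twist_def by (intro ext) (auto intro!: sum.cong)

lemma compatible_twist:
  assumes "n \<ge> 1"
  shows "compatible g n (twist g n a b)"
  unfolding compatible_def
proof (intro conjI allI impI)
  fix e h A assume "(e,h,A) \<in> Dgn g n"
  then have "Sop_shift g (e, g + 1 - e - h, {1..n} - A) = - Sop_shift g (e, h, A)"
    using assms by (intro Sop_shift_complement) (simp_all add: Dgn_def)
  moreover have "Top_shift j (e, g + 1 - e - h, {1..n} - A) = - Top_shift j (e, h, A)" if "j \<in> {2..n}" for j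
    using that by (intro Top_shift_complement) simp
  ultimately show "twist g n a b (e,h,A) + twist g n a b (e, g + 1 - e - h, {1..n} - A) = 0"
    by (simp add: twist_def sum_negf)
next
  fix e h A e' h' A' e'' h'' A''
  assume "(e,h,A) \<in> Dgn g n \<and> (e',h',A') \<in> Dgn g n \<and> (e'',h'',A'') \<in> Dgn g n \<and>
    A = A' \<union> A'' \<and> A' \<inter> A'' = {} \<and> 2 * (int h + 1 - int h' - int h'') = int e' + int e'' - int e"
  then have A: "A = A' \<union> A''" and disj: "A' \<inter> A'' = {}"
    and hh: "2 * (int h + 1 - int h' - int h'') = int e' + int e'' - int e" by simp_all
  have "Top_shift j (e,h,A) = Top_shift j (e',h',A') + Top_shift j (e'',h'',A'')" for j
    unfolding A by (rule Top_shift_union[OF disj])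
  moreover have "Sop_shift g (e,h,A) = Sop_shift g (e',h',A') + Sop_shift g (e'',h'',A'')"
    unfolding A by (rule Sop_shift_union[OF disj hh])
  ultimately show "twist g n a b (e,h,A) = twist g n a b (e',h',A') + twist g n a b (e'',h'',A'')"
    by (simp add: twist_def sum.distrib algebra_simps)
qed

lemma Top_eq_shift_twist:
  assumes "j \<in> {2..n}"
  shows "Top g n j = shift g n (twist g n (\<lambda>i. if i = j then 1 else 0) 0)"
proof -
  have "twist g n (\<lambda>i. if i = j then 1 else 0) 0 = Top_shift j"
    using assms by (simp add: twist_def fun_eq_iff if_distrib[of "\<lambda>x. x * _"] sum.delta cong: if_cong)
  then show ?thesis by (simp add: Top_eq_shift)
qed

lemma Sop_eq_shift_twist: "Sop g n = shift g n (twist g n (\<lambda>_. 0) 1)"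
proof -
  have "twist g n (\<lambda>_. 0) 1 = Sop_shift g" by (simp add: twist_def fun_eq_iff)
  then show ?thesis by (simp add: Sop_eq_shift)
qed

lemma gens_eq_shift_twist:
  assumes "f \<in> gens g n"
  obtains a b where "f = shift g n (twist g n a b)"
  using assms Top_eq_shift_twist Sop_eq_shift_twist unfolding gens_def by blast

lemma gens_bij:
  assumes "n \<ge> 1" and "f \<in> gens g n"
  shows "bij_betw f (USC g n d) (USC g n d)"
  using assms by (metis gens_eq_shift_twist shift_bij compatible_twist)

lemma orbit_subset_USC:
  assumes "n \<ge> 1" and "m \<in> USC g n d"
  shows "orbit g n d m \<subseteq> USC g n d"
proof
  fix x assume "x \<in> orbit g n d m"
  then show "x \<in> USC g n d"
  proof induction
    case base
    show ?case by (rule assms(2))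
  next
    case (fwd x f)
    then show ?case using gens_bij[OF assms(1)] bij_betwE by blast
  next
    case (bwd x f)
    then show ?case using gens_bij[OF assms(1)] bij_betw_inv_into bij_betwE by blast
  qed
qed

lemma shift_twist_shift_twist:
  "shift g n (\<lambda>v. k * twist g n a' b' v) (shift g n (twist g n a b) m)
    = shift g n (twist g n (\<lambda>j. a j + k * a' j) (b + k * b')) m"
  by (simp add: shift_shift twist_lincomb)

lemma orbit_shift_twist_power:
  assumes "n \<ge> 1" and m: "m \<in> USC g n d" and gen: "shift g n (twist g n a' b') \<in> gens g n"
    and x: "shift g n (twist g n a b) m \<in> orbit g n d m"
  shows "shift g n (twist g n (\<lambda>j. a j + k * a' j) (b + k * b')) m \<in> orbit g n d m"
proof (induction k rule: int_induct[where k = 0])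
  case base
  show ?case using x by simp
next
  case (step1 i)
  have "shift g n (twist g n a' b') (shift g n (twist g n (\<lambda>j. a j + i * a' j) (b + i * b')) m)
      = shift g n (twist g n (\<lambda>j. a j + (i + 1) * a' j) (b + (i + 1) * b')) m"
    using shift_twist_shift_twist[where k = 1] by (simp add: algebra_simps)
  then show ?case using orbit.fwd[OF step1(2) gen] by simp
next
  case (step2 i)
  let ?x = "shift g n (twist g n (\<lambda>j. a j + i * a' j) (b + i * b')) m"
  have "?x \<in> USC g n d" using orbit_subset_USC[OF assms(1) m] step2(2) by blast
  then have "inv_into (USC g n d) (shift g n (twist g n a' b')) ?x
      = shift g n (twist g n (\<lambda>j. a j + (i - 1) * a' j) (b + (i - 1) * b')) m"
    using shift_twist_shift_twist[where k = "-1"]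
    by (simp add: inv_into_shift compatible_twist[OF assms(1)] algebra_simps)
  then show ?case using orbit.bwd[OF step2(2) gen] by simp
qed

lemma shift_twist_zero:
  assumes "m \<in> USC g n d"
  shows "shift g n (twist g n (\<lambda>_. 0) 0) m = m"
proof -
  have "twist g n (\<lambda>_. 0) 0 = (\<lambda>_. 0)" by (simp add: twist_def fun_eq_iff)
  then show ?thesis by (simp add: shift_zero[OF assms])
qed

lemma shift_twist_in_orbit:
  assumes n: "n \<ge> 1" and m: "m \<in> USC g n d"
  shows "shift g n (twist g n a b) m \<in> orbit g n d m"
proof -
  have "shift g n (twist g n (\<lambda>j. if j \<in> F then a j else 0) b) m \<in> orbit g n d m"
    if "F \<subseteq> {2..n}" for F
    using finite_subset[OF that finite_atLeastAtMost] that
  proof (induction F rule: finite_subset_induct)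
    case empty
    have "Sop g n \<in> gens g n" by (simp add: gens_def)
    moreover have "shift g n (twist g n (\<lambda>_. 0) 0) m \<in> orbit g n d m"
      using orbit.base shift_twist_zero[OF m] by simp
    ultimately have "shift g n (twist g n (\<lambda>j. 0 + b * 0) (0 + b * 1)) m \<in> orbit g n d m"
      unfolding Sop_eq_shift_twist by (rule orbit_shift_twist_power[OF n m])
    then show ?case by simp
  next
    case (insert j F)
    have "Top g n j \<in> gens g n" using insert.hyps(2) by (auto simp: gens_def)
    then have "shift g n (twist g n (\<lambda>i. (if i \<in> F then a i else 0) + a j * (if i = j then 1 else 0))
        (b + a j * 0)) m \<in> orbit g n d m"
      unfolding Top_eq_shift_twist[OF insert.hyps(2)]
      by (rule orbit_shift_twist_power[OF n m _ insert.IH])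
    moreover have "(\<lambda>i. (if i \<in> F then a i else 0) + a j * (if i = j then 1 else 0))
        = (\<lambda>i. if i \<in> insert j F then a i else 0)"
      using insert.hyps(3) by auto
    ultimately show ?case by simp
  qed
  moreover have "twist g n (\<lambda>j. if j \<in> {2..n} then a j else 0) b = twist g n a b"
    by (rule twist_cong) simp
  ultimately show ?thesis by (metis order_refl)
qed

lemma orbit_iff:
  assumes n: "n \<ge> 1" and m: "m \<in> USC g n d"
  shows "x \<in> orbit g n d m \<longleftrightarrow> (\<exists>a b. x = shift g n (twist g n a b) m)"
proof
  assume "x \<in> orbit g n d m"
  then show "\<exists>a b. x = shift g n (twist g n a b) m"
  proof induction
    case base
    show ?case using shift_twist_zero[OF m] by metis
  next
    case (fwd x f)
    obtain a b where x: "x = shift g n (twist g n a b) m" using fwd.IH by blast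
    obtain a' b' where f: "f = shift g n (twist g n a' b')" using gens_eq_shift_twist[OF fwd.hyps(2)] .
    show ?case using shift_twist_shift_twist[where k = 1] unfolding f x by auto
  next
    case (bwd x f)
    obtain a b where x: "x = shift g n (twist g n a b) m" using bwd.IH by blast
    obtain a' b' where f: "f = shift g n (twist g n a' b')" using gens_eq_shift_twist[OF bwd.hyps(2)] .
    have "x \<in> USC g n d" using orbit_subset_USC[OF n m] bwd.hyps(1) by blast
    then show ?case using shift_twist_shift_twist[where k = "-1"]
      unfolding f by (auto simp: inv_into_shift compatible_twist[OF n] x)
  qed
next
  assume "\<exists>a b. x = shift g n (twist g n a b) m"
  then show "x \<in> orbit g n d m" using shift_twist_in_orbit[OF n m] by blast
qed

lemma add_mult_in_range_iff:
  fixes t b K :: int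
  assumes "K > 0"
  shows "t + b * K \<in> {0..K - 1} \<longleftrightarrow> b = - (t div K)"
proof
  assume "t + b * K \<in> {0..K - 1}"
  then have "(t + b * K) div K = 0" by simp
  then show "b = - (t div K)" using assms by simp
next
  assume "b = - (t div K)"
  then have "t + b * K = t mod K" by (simp add: minus_div_mult_eq_mod[symmetric])
  then show "t + b * K \<in> {0..K - 1}" using assms by simp
qed

lemma two_edge_vine_in_Dgn: "g \<ge> 2 \<Longrightarrow> i \<in> {1..n} \<Longrightarrow> (2, 0, {i}) \<in> Dgn g n"
  by (auto simp: Dgn_def)

lemma twist_at_first_marking: "twist g n a b (2, 0, {1}) = (\<Sum>j\<in>{2..n}. a j) + b * (2 * int g - 2)"
  by (simp add: twist_def Top_shift_def Sop_shift_def)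

lemma twist_at_marking: "i \<in> {2..n} \<Longrightarrow> twist g n a b (2, 0, {i}) = - a i"
  by (simp add: twist_def Top_shift_def Sop_shift_def sum_negf of_bool_def if_distrib[of "\<lambda>x. _ * x"]
      sum.delta cong: if_cong)

lemma normalized_shift_twist_iff:
  assumes g: "g \<ge> 2" and n: "n \<ge> 1"
  shows "normalized g n (shift g n (twist g n a b) m) \<longleftrightarrow>
    (\<forall>i\<in>{2..n}. a i = m (2, 0, {i})) \<and>
    b = - ((m (2, 0, {1}) + (\<Sum>i\<in>{2..n}. m (2, 0, {i}))) div (2 * int g - 2))"
proof -
  let ?K = "2 * int g - 2"
  have first: "shift g n (twist g n a b) m (2, 0, {1}) = m (2, 0, {1}) + (\<Sum>j\<in>{2..n}. a j) + b * ?K"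
    using two_edge_vine_in_Dgn[OF g, of 1 n] n twist_at_first_marking[of g n a b] by (simp add: shift_def)
  have other: "shift g n (twist g n a b) m (2, 0, {i}) = m (2, 0, {i}) - a i" if "i \<in> {2..n}" for i
    using two_edge_vine_in_Dgn[OF g, of i n] that by (simp add: shift_def twist_at_marking)
  have "normalized g n (shift g n (twist g n a b) m) \<longleftrightarrow>
      (\<forall>i\<in>{2..n}. a i = m (2, 0, {i})) \<and> m (2, 0, {1}) + (\<Sum>j\<in>{2..n}. a j) + b * ?K \<in> {0..?K - 1}"
    unfolding normalized_def first by (auto simp: other)
  also have "\<dots> \<longleftrightarrow> (\<forall>i\<in>{2..n}. a i = m (2, 0, {i})) \<and>
      (m (2, 0, {1}) + (\<Sum>i\<in>{2..n}. m (2, 0, {i}))) + b * ?K \<in> {0..?K - 1}"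
    using sum.cong[OF refl, of "{2..n}" a "\<lambda>i. m (2, 0, {i})"] by auto
  also have "\<dots> \<longleftrightarrow> (\<forall>i\<in>{2..n}. a i = m (2, 0, {i})) \<and>
      b = - ((m (2, 0, {1}) + (\<Sum>i\<in>{2..n}. m (2, 0, {i}))) div ?K)"
    using g by (simp only: add_mult_in_range_iff[of ?K])
  finally show ?thesis .
qed

theorem mainTheorem8:
  fixes g n :: nat and d :: int
  assumes "g \<ge> 2" and "n \<ge> 1"
  shows "(\<forall>f \<in> gens g n. bij_betw f (USC g n d) (USC g n d)) \<and>
         (\<forall>m \<in> USC g n d. \<exists>!m'. m' \<in> orbit g n d m \<and> normalized g n m')"
proof (intro conjI ballI)
  fix f assume "f \<in> gens g n"
  then show "bij_betw f (USC g n d) (USC g n d)" using gens_bij[OF assms(2)] by blast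
next
  fix m assume m: "m \<in> USC g n d"
  define a where "a i = m (2, 0, {i})" for i
  define b where "b = - ((m (2, 0, {1}) + (\<Sum>i\<in>{2..n}. m (2, 0, {i}))) div (2 * int g - 2))"
  note orbit = orbit_iff[OF assms(2) m] and normal = normalized_shift_twist_iff[OF assms]
  show "\<exists>!m'. m' \<in> orbit g n d m \<and> normalized g n m'"
  proof (rule ex1I)
    show "shift g n (twist g n a b) m \<in> orbit g n d m \<and> normalized g n (shift g n (twist g n a b) m)"
      using orbit normal by (auto simp: a_def b_def)
  next
    fix m' assume "m' \<in> orbit g n d m \<and> normalized g n m'"
    then obtain a' b' where m': "m' = shift g n (twist g n a' b') m"
      and "\<forall>i\<in>{2..n}. a' i = a i" "b' = b"
      using orbit normal by (auto simp: a_def b_def)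
    then show "m' = shift g n (twist g n a b) m" using twist_cong by metis
  qed
qed

end
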